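(* There is an absolute constant $c'>0$ such that the following holds. Let $m\ge1$, $n>2m$ be integers and $\sigma_1^2,\dots,\sigma_n^2>0$. Let $L\subset G^{r}$, $|L|=2m$, consist of $2m$ arms of $G^{r}$ with the largest variances. Define $\eta_F=\binom{2m}{m-1}^{-1}$ for every $F\subset L$ with $|F|=m-1$ and $\eta_F=0$ for every other $F\subset[n]$ with $|F|=m-1$. Then \[ \sum_{M\subset[n]:|M|=m}\Big(\sum_{l\in M}\eta_{M\setminus\{l\}}\sigma_l^2\Big)\,\mathrm{Ent}\big(\{\eta_{M\setminus\{l\}}\sigma_l^2\}_{l\in M}\big)\ \ge\ c'\sum_{i\in G^{l}}\sigma_i^2\,\mathrm{Ent}(\sigma^2_{G^{r}})-\ln(2)\sum_{i\in L}\sigma_i^2 . \]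
   Context: For a nonnegative vector $a$, $\mathrm{Ent}(a)=-\sum_i\hat a_i\ln\hat a_i$ with $\hat a_i=a_i/\sum_ja_j$ and $0\ln0=0$ (a term whose vector is identically zero contributes $0$); $\sigma^2_S=(\sigma_i^2)_{i\in S}$. Let $\underline\sigma^2=\min_i\sigma_i^2$, $G_j=\{i\in[n]:2^{j-1}\le\sigma_i^2/\underline\sigma^2<2^j\}$ for $j=1,\dots,k$ covering $[n]$. $G^{l}=\bigcup_{j:|G_j|\le2m}G_j$. $G'_j=G_j$ if $|G_j|\le2m$, otherwise $G'_j\subset G_j$ with $|G'_j|=2m$; $G^{r}=\bigcup_jG'_j$, the choices made to maximize $\mathrm{Ent}(\sigma^2_{G^{r}})$. (Under $n>2m$ one has $|G^{r}|\ge2m$, so $L$ exists.) *)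

theory Defs
  imports Complex_Main
begin

text \<open>Arms are indexed by [n] = {1..n}; v i is the variance sigma_i^2.\<close>

definition Ent :: "('a \<Rightarrow> real) \<Rightarrow> 'a set \<Rightarrow> real" where
  "Ent a S = (let s = (\<Sum>j\<in>S. a j) in
     if s = 0 then 0
     else - (\<Sum>i\<in>S. if a i = 0 then 0 else (a i / s) * ln (a i / s)))"

definition minvar :: "nat \<Rightarrow> (nat \<Rightarrow> real) \<Rightarrow> real" where
  "minvar n v = Min (v ` {1..n})"

definition grp :: "nat \<Rightarrow> (nat \<Rightarrow> real) \<Rightarrow> nat \<Rightarrow> nat set" where
  "grp n v j = {i \<in> {1..n}. (2::real) ^ (j - 1) \<le> v i / minvar n v \<and> v i / minvar n v < 2 ^ j}"

definition Gl :: "nat \<Rightarrow> nat \<Rightarrow> (nat \<Rightarrow> real) \<Rightarrow> nat set" where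
  "Gl n m v = \<Union> {grp n v j | j. 1 \<le> j \<and> card (grp n v j) \<le> 2 * m}"

definition admissible_Gr :: "nat \<Rightarrow> nat \<Rightarrow> (nat \<Rightarrow> real) \<Rightarrow> nat set \<Rightarrow> bool" where
  "admissible_Gr n m v R \<longleftrightarrow> R \<subseteq> {1..n} \<and>
     (\<forall>j\<ge>1. if card (grp n v j) \<le> 2 * m then R \<inter> grp n v j = grp n v j
             else card (R \<inter> grp n v j) = 2 * m)"

definition is_Gr :: "nat \<Rightarrow> nat \<Rightarrow> (nat \<Rightarrow> real) \<Rightarrow> nat set \<Rightarrow> bool" where
  "is_Gr n m v R \<longleftrightarrow> admissible_Gr n m v R \<and>
     (\<forall>R'. admissible_Gr n m v R' \<longrightarrow> Ent v R' \<le> Ent v R)"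

definition is_top :: "nat \<Rightarrow> (nat \<Rightarrow> real) \<Rightarrow> nat set \<Rightarrow> nat set \<Rightarrow> bool" where
  "is_top m v R L \<longleftrightarrow> L \<subseteq> R \<and> card L = 2 * m \<and> (\<forall>i\<in>L. \<forall>j\<in>R - L. v j \<le> v i)"

definition eta :: "nat \<Rightarrow> nat set \<Rightarrow> nat set \<Rightarrow> real" where
  "eta m L F = (if F \<subseteq> L \<and> card F = m - 1 then 1 / real ((2 * m) choose (m - 1)) else 0)"

end

theory Submission
  imports Defs "HOL-Analysis.Harmonic_Numbers"
begin

(* Write H(A) = (sum_{i in A} v_i) Ent(v, A) = sum_{i in A} v_i ln(V_A / v_i), where V_A is the
   total variance of A.

   Only the m-subsets M of L receive nonzero weights, and all of these weights equal
   eta = 1 / C(2m, m-1); so the left-hand side is at least eta times the sum of H(M) over the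
   m-subsets of L.  Since H(M) = sum_{l in M} v_l ln(V_L / v_l) - V_M ln(V_L / V_M), double counting
   the first sum and pairing M with L - M in the second (a binary entropy is at most ln 2) gives
   the lower bound H(L)/2 - V_L ln 2.

   On the right, G^l is contained in G^r, and every arm of G^r - L has variance at most
   a = min_L v.  Each dyadic group meets G^r in at most 2m arms, so the square roots of the
   variances in G^r - L sum to at most 10 m sqrt a.  With V = V_{G^r}, splitting
   ln(V / v_i) = ln(V / a) + ln(a / v_i) and bounding ln(a / v_i) by 2 sqrt(a / v_i) shows that the
   tail adds at most O(H(L) + V_L) to H(G^r), because 2m a ln(V_L / a) <= H(L) + V_L.
   Altogether (sum_{G^l} v) Ent(v, G^r) is at most 6 H(L) + 45 V_L, and ln 2 >= 2/3 lets
   c' = 1/200 absorb the constants. *)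

section \<open>Entropy of positive weights\<close>

lemma Ent_cong:
  assumes "\<And>i. i \<in> A \<Longrightarrow> a i = b i"
  shows "Ent a A = Ent b A"
proof -
  have "sum a A = sum b A" using assms by (rule sum.cong[OF refl])
  then show ?thesis using assms unfolding Ent_def Let_def by (auto intro!: sum.cong)
qed

lemma Ent_cmult: "0 < c \<Longrightarrow> Ent (\<lambda>i. c * a i) A = Ent a A"
  by (auto simp: Ent_def Let_def simp flip: sum_distrib_left intro!: sum.cong)

lemma Ent_nonneg:
  assumes "\<And>i. i \<in> A \<Longrightarrow> 0 \<le> a i"
  shows "0 \<le> Ent a A"
proof (cases "finite A \<and> (\<Sum>j\<in>A. a j) \<noteq> 0")
  case True
  define s where "s = (\<Sum>j\<in>A. a j)"
  have "0 < s" using True assms by (simp add: s_def order_le_neq_trans sum_nonneg)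
  have "(if a i = 0 then 0 else a i / s * ln (a i / s)) \<le> 0" if "i \<in> A" for i
  proof -
    have "a i \<le> s" unfolding s_def using True assms that by (intro member_le_sum) auto
    then have "ln (a i / s) \<le> 0"
      using \<open>0 < s\<close> assms[OF that] by (cases "a i = 0") auto
    then show ?thesis
      using \<open>0 < s\<close> assms[OF that] by (simp add: mult_nonneg_nonpos divide_nonpos_pos)
  qed
  then show ?thesis using True by (simp add: Ent_def Let_def s_def[symmetric] sum_nonpos)
qed (auto simp: Ent_def)

lemma sum_mult_Ent:
  assumes "finite A" "\<And>i. i \<in> A \<Longrightarrow> 0 < a i"
  shows "(\<Sum>j\<in>A. a j) * Ent a A = (\<Sum>i\<in>A. a i * ln ((\<Sum>j\<in>A. a j) / a i))"
proof (cases "A = {}")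
  case False
  define s where "s = (\<Sum>j\<in>A. a j)"
  have "0 < s" unfolding s_def using assms False by (intro sum_pos) auto
  have "s * Ent a A = (\<Sum>i\<in>A. - (s * (a i / s * ln (a i / s))))"
    using \<open>0 < s\<close> assms
    by (simp add: Ent_def Let_def s_def[symmetric] sum_distrib_left sum_negf less_imp_neq[symmetric])
  also have "\<dots> = (\<Sum>i\<in>A. a i * ln (s / a i))"
    using \<open>0 < s\<close> assms by (intro sum.cong) (auto simp: ln_div algebra_simps)
  finally show ?thesis by (simp add: s_def)
qed simp

lemma sum_mult_ln_rescale:
  assumes "finite A" "A \<noteq> {}" "\<And>i. i \<in> A \<Longrightarrow> 0 < v i" "0 < N"
  shows "(\<Sum>i\<in>A. v i * ln (N / v i))
       = (\<Sum>i\<in>A. v i) * Ent v A + (\<Sum>i\<in>A. v i) * ln (N / (\<Sum>i\<in>A. v i))"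
proof -
  have "0 < (\<Sum>i\<in>A. v i)" using assms by (intro sum_pos) auto
  then have "(\<Sum>i\<in>A. v i * ln (N / v i))
      = (\<Sum>i\<in>A. v i * ln ((\<Sum>j\<in>A. v j) / v i) + v i * ln (N / (\<Sum>j\<in>A. v j)))"
    using assms by (intro sum.cong) (auto simp: ln_div algebra_simps)
  then show ?thesis using assms by (simp add: sum.distrib sum_mult_Ent flip: sum_distrib_right)
qed

lemma binary_entropy_le_ln2:
  fixes x y :: real
  assumes "0 < x" "0 < y"
  shows "x * ln ((x + y) / x) + y * ln ((x + y) / y) \<le> (x + y) * ln 2"
proof -
  have "x * ln ((x + y) / (2 * x)) \<le> x * ((x + y) / (2 * x) - 1)"
    and "y * ln ((x + y) / (2 * y)) \<le> y * ((x + y) / (2 * y) - 1)"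
    using assms by (intro mult_left_mono ln_le_minus_one; simp)+
  moreover have "x * ((x + y) / (2 * x) - 1) + y * ((x + y) / (2 * y) - 1) = 0"
    using assms by (simp add: field_simps)
  ultimately show ?thesis using assms by (simp add: ln_div ln_mult algebra_simps)
qed

lemma mult_ln_div_le_sqrt:
  fixes a x N :: real
  assumes "0 < x" "x \<le> a" "0 < N"
  shows "x * ln (N / x) \<le> x * ln (N / a) + 2 * sqrt a * sqrt x"
proof -
  have "ln (sqrt (a / x)) \<le> sqrt (a / x) - 1"
    using assms by (intro ln_le_minus_one) auto
  then have "ln (a / x) \<le> 2 * sqrt (a / x)"
    using assms by (simp add: ln_sqrt)
  then have "x * ln (a / x) \<le> x * (2 * sqrt (a / x))"
    using assms by (intro mult_left_mono) auto
  also have "x * (2 * sqrt (a / x)) = 2 * sqrt a * sqrt x"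
    using assms by (simp add: real_sqrt_divide field_simps)
  finally show ?thesis
    using assms by (simp add: ln_div algebra_simps)
qed

lemma card_mult_ln_le_sum_mult_Ent:
  fixes v :: "'a \<Rightarrow> real"
  assumes "finite L" "0 < a" "\<And>x. x \<in> L \<Longrightarrow> a \<le> v x"
  shows "card L * (a * ln ((\<Sum>i\<in>L. v i) / a)) \<le> (\<Sum>i\<in>L. v i) * Ent v L + (\<Sum>i\<in>L. v i)"
proof -
  define S where "S = (\<Sum>i\<in>L. v i)"
  have "a * ln (S / a) \<le> v x * ln (S / v x) + v x" if "x \<in> L" for x
  proof -
    have "0 < v x" using assms that by (auto intro: order_less_le_trans)
    have "v x \<le> S"
      unfolding S_def using assms that by (intro member_le_sum) (auto intro: order_trans[OF less_imp_le])
    then have "a * ln (S / v x) \<le> v x * ln (S / v x)"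
      using assms that \<open>0 < v x\<close> by (intro mult_right_mono) auto
    moreover have "a * ln (v x / a) \<le> v x - a"
      using mult_left_mono[OF ln_le_minus_one[of "v x / a"], of a] assms \<open>0 < v x\<close>
      by (simp add: right_diff_distrib)
    moreover have "a * ln (S / a) = a * ln (S / v x) + a * ln (v x / a)"
      using assms \<open>0 < v x\<close> \<open>v x \<le> S\<close> by (simp add: ln_div algebra_simps)
    ultimately show ?thesis using assms by linarith
  qed
  then have "(\<Sum>x\<in>L. a * ln (S / a)) \<le> (\<Sum>x\<in>L. v x * ln (S / v x) + v x)"
    by (rule sum_mono)
  then show ?thesis
    using assms by (simp add: sum.distrib sum_mult_Ent S_def order_less_le_trans)
qed

section \<open>Averaging over the m-subsets of L\<close>

lemma card_subsets_containing:
  assumes "finite L" "l \<in> L" "1 \<le> m"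
  shows "card {M. M \<subseteq> L \<and> card M = m \<and> l \<in> M} = (card L - 1) choose (m - 1)"
proof -
  have "bij_betw (insert l) {B. B \<subseteq> L - {l} \<and> card B = m - 1} {M. M \<subseteq> L \<and> card M = m \<and> l \<in> M}"
  proof (rule bij_betw_byWitness[where f' = "\<lambda>M. M - {l}"])
    show "insert l ` {B. B \<subseteq> L - {l} \<and> card B = m - 1} \<subseteq> {M. M \<subseteq> L \<and> card M = m \<and> l \<in> M}"
    proof clarify
      fix B assume "B \<subseteq> L - {l}" "card B = m - 1"
      moreover have "finite B" using \<open>B \<subseteq> L - {l}\<close> assms(1) by (rule finite_subset[OF _ finite_Diff])
      moreover have "l \<notin> B" using \<open>B \<subseteq> L - {l}\<close> by blast
      ultimately show "insert l B \<subseteq> L \<and> card (insert l B) = m \<and> l \<in> insert l B"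
        using assms by auto
    qed
    show "(\<lambda>M. M - {l}) ` {M. M \<subseteq> L \<and> card M = m \<and> l \<in> M} \<subseteq> {B. B \<subseteq> L - {l} \<and> card B = m - 1}"
      using assms by (auto dest: finite_subset)
  qed auto
  then have "card {M. M \<subseteq> L \<and> card M = m \<and> l \<in> M} = card {B. B \<subseteq> L - {l} \<and> card B = m - 1}"
    by (simp add: bij_betw_same_card)
  also have "\<dots> = (card L - 1) choose (m - 1)"
    using assms by (simp add: n_subsets)
  finally show ?thesis .
qed

lemma sum_subsets_sum:
  fixes h :: "'a \<Rightarrow> 'b::comm_semiring_1"
  assumes "finite L" "1 \<le> m"
  shows "(\<Sum>M\<in>{M. M \<subseteq> L \<and> card M = m}. \<Sum>l\<in>M. h l)
       = of_nat ((card L - 1) choose (m - 1)) * (\<Sum>l\<in>L. h l)"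
proof -
  let ?K = "{M. M \<subseteq> L \<and> card M = m}"
  have "(\<Sum>M\<in>?K. \<Sum>l\<in>M. h l) = (\<Sum>M\<in>?K. \<Sum>l\<in>{l. l \<in> L \<and> l \<in> M}. h l)"
    by (intro sum.cong) auto
  also have "\<dots> = (\<Sum>l\<in>L. \<Sum>M\<in>{M. M \<in> ?K \<and> l \<in> M}. h l)"
    using assms by (intro sum.swap_restrict) auto
  also have "\<dots> = (\<Sum>l\<in>L. of_nat ((card L - 1) choose (m - 1)) * h l)"
    using assms by (intro sum.cong) (simp_all add: card_subsets_containing)
  finally show ?thesis by (simp add: sum_distrib_left)
qed

lemma sum_subsets_complement_pairing:
  fixes v :: "'a \<Rightarrow> real"
  assumes "finite L" "card L = 2 * m" "1 \<le> m" "\<And>i. i \<in> L \<Longrightarrow> 0 < v i"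
  shows "(\<Sum>M\<in>{M. M \<subseteq> L \<and> card M = m}. (\<Sum>i\<in>M. v i) * ln ((\<Sum>i\<in>L. v i) / (\<Sum>i\<in>M. v i)))
       \<le> card {M. M \<subseteq> L \<and> card M = m} * ((\<Sum>i\<in>L. v i) * ln 2) / 2"
proof -
  let ?K = "{M. M \<subseteq> L \<and> card M = m}"
  define f where "f M = (\<Sum>i\<in>M. v i) * ln ((\<Sum>i\<in>L. v i) / (\<Sum>i\<in>M. v i))" for M
  have compl: "L - M \<in> ?K" "L - (L - M) = M" if "M \<in> ?K" for M
    using that assms finite_subset[of M L] by (auto simp: card_Diff_subset)
  have pair: "f M + f (L - M) \<le> (\<Sum>i\<in>L. v i) * ln 2" if "M \<in> ?K" for M
  proof -
    have "M \<noteq> {}" "L - M \<noteq> {}" "finite M"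
      using that compl(1)[OF that] assms by (auto dest: finite_subset)
    then have "0 < (\<Sum>i\<in>M. v i)" "0 < (\<Sum>i\<in>L - M. v i)"
      using that assms by (auto intro!: sum_pos)
    moreover have "(\<Sum>i\<in>L. v i) = (\<Sum>i\<in>M. v i) + (\<Sum>i\<in>L - M. v i)"
      using that assms(1) by (simp add: sum.subset_diff[of M L])
    ultimately show ?thesis unfolding f_def by (simp add: binary_entropy_le_ln2)
  qed
  have "(\<Sum>M\<in>?K. f (L - M)) = (\<Sum>M\<in>?K. f M)"
    by (rule sum.reindex_bij_witness[where i = "\<lambda>M. L - M" and j = "\<lambda>M. L - M"]) (use compl in auto)
  then have "2 * (\<Sum>M\<in>?K. f M) = (\<Sum>M\<in>?K. f M + f (L - M))"
    by (simp add: sum.distrib)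
  also have "\<dots> \<le> (\<Sum>M\<in>?K. (\<Sum>i\<in>L. v i) * ln 2)"
    by (rule sum_mono) (rule pair)
  also have "\<dots> = card ?K * ((\<Sum>i\<in>L. v i) * ln 2)"
    by simp
  finally show ?thesis unfolding f_def by simp
qed

lemma central_binomial_eq:
  "1 \<le> m \<Longrightarrow> (2 * m) choose m = 2 * ((2 * m - 1) choose (m - 1))"
  using times_binomial_minus1_eq[of m "2 * m"] by simp

lemma binomial_ratio_below_middle:
  assumes "1 \<le> m"
  shows "2 * m * ((2 * m - 1) choose (m - 1)) = (m + 1) * ((2 * m) choose (m - 1))"
proof -
  obtain k where k: "Suc k = m" using assms by (cases m) auto
  then have "Suc (k + m) = 2 * m" "k = m - 1" by simp_all
  then have "m * ((2 * m) choose m) = (m + 1) * ((2 * m) choose (m - 1))"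
    using Suc_times_binomial_add[of k m, unfolded k] by (simp add: mult_2)
  then show ?thesis using central_binomial_eq[OF assms] by simp
qed

lemma sum_subsets_sum_mult_Ent_ge:
  fixes v :: "'a \<Rightarrow> real"
  assumes "finite L" "card L = 2 * m" "1 \<le> m" "\<And>i. i \<in> L \<Longrightarrow> 0 < v i"
  shows "((2 * m - 1) choose (m - 1)) * ((\<Sum>i\<in>L. v i) * Ent v L - (\<Sum>i\<in>L. v i) * ln 2)
       \<le> (\<Sum>M\<in>{M. M \<subseteq> L \<and> card M = m}. (\<Sum>i\<in>M. v i) * Ent v M)"
proof -
  let ?K = "{M. M \<subseteq> L \<and> card M = m}"
  define S where "S = (\<Sum>i\<in>L. v i)"
  define c where "c = real ((2 * m - 1) choose (m - 1))"
  have "L \<noteq> {}" using assms by auto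
  then have "0 < S" unfolding S_def using assms by (intro sum_pos) auto
  have split: "(\<Sum>i\<in>M. v i) * Ent v M
      = (\<Sum>l\<in>M. v l * ln (S / v l)) - (\<Sum>i\<in>M. v i) * ln (S / (\<Sum>i\<in>M. v i))" if "M \<in> ?K" for M
  proof -
    have "finite M" "M \<noteq> {}" "\<And>i. i \<in> M \<Longrightarrow> 0 < v i"
      using that assms finite_subset[of M L] by auto
    from sum_mult_ln_rescale[OF this \<open>0 < S\<close>] show ?thesis by simp
  qed
  have "(\<Sum>M\<in>?K. \<Sum>l\<in>M. v l * ln (S / v l)) = c * (S * Ent v L)"
    using assms by (simp add: sum_subsets_sum sum_mult_Ent c_def S_def)
  moreover have "(\<Sum>M\<in>?K. (\<Sum>i\<in>M. v i) * ln (S / (\<Sum>i\<in>M. v i))) \<le> c * (S * ln 2)"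
    using sum_subsets_complement_pairing[OF assms] assms
    by (simp add: n_subsets central_binomial_eq c_def S_def)
  ultimately have "c * (S * Ent v L - S * ln 2) \<le> (\<Sum>M\<in>?K. (\<Sum>i\<in>M. v i) * Ent v M)"
    by (simp add: split sum_subtractf right_diff_distrib)
  then show ?thesis by (simp add: c_def S_def)
qed

lemma eta_objective_term_eq:
  assumes "finite M" "M \<subseteq> L" "card M = m"
  shows "(\<Sum>l\<in>M. eta m L (M - {l}) * v l) * Ent (\<lambda>l. eta m L (M - {l}) * v l) M
       = (\<Sum>i\<in>M. v i) * Ent v M / ((2 * m) choose (m - 1))"
proof -
  define \<eta> where "\<eta> = 1 / real ((2 * m) choose (m - 1))"
  have "0 < \<eta>" by (simp add: \<eta>_def)
  have weights: "eta m L (M - {l}) * v l = \<eta> * v l" if "l \<in> M" for l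
    using assms that by (auto simp: eta_def \<eta>_def)
  have "(\<Sum>l\<in>M. eta m L (M - {l}) * v l) = \<eta> * (\<Sum>i\<in>M. v i)"
    unfolding sum_distrib_left by (rule sum.cong[OF refl weights])
  moreover have "Ent (\<lambda>l. eta m L (M - {l}) * v l) M = Ent v M"
    using Ent_cong[of M _ "\<lambda>l. \<eta> * v l", OF weights] Ent_cmult[OF \<open>0 < \<eta>\<close>] by simp
  ultimately show ?thesis by (simp add: \<eta>_def)
qed

lemma eta_objective_term_nonneg:
  assumes "finite M" "\<And>i. i \<in> M \<Longrightarrow> 0 < v i"
  shows "0 \<le> (\<Sum>l\<in>M. eta m L (M - {l}) * v l) * Ent (\<lambda>l. eta m L (M - {l}) * v l) M"
proof -
  have "0 \<le> eta m L (M - {l}) * v l" if "l \<in> M" for l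
    using assms(2)[OF that] by (simp add: eta_def)
  then show ?thesis by (simp add: Ent_nonneg sum_nonneg)
qed

lemma eta_objective_ge:
  fixes v :: "nat \<Rightarrow> real"
  assumes "1 \<le> m" "L \<subseteq> {1..n}" "card L = 2 * m" "\<forall>i\<in>{1..n}. 0 < v i"
  shows "(\<Sum>i\<in>L. v i) * Ent v L / 2 - (\<Sum>i\<in>L. v i) * ln 2
       \<le> (\<Sum>M\<in>{M. M \<subseteq> {1..n} \<and> card M = m}.
            (\<Sum>l\<in>M. eta m L (M - {l}) * v l) * Ent (\<lambda>l. eta m L (M - {l}) * v l) M)"
    (is "_ \<le> (\<Sum>M\<in>_. ?obj M)")
proof -
  let ?K = "{M. M \<subseteq> L \<and> card M = m}"
  define S where "S = (\<Sum>i\<in>L. v i)"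
  define r where "r = real ((2 * m - 1) choose (m - 1)) / real ((2 * m) choose (m - 1))"
  have "finite L" using assms(2) finite_subset by blast
  have pos: "\<And>i. i \<in> L \<Longrightarrow> 0 < v i" using assms by auto
  have "?obj M = (\<Sum>i\<in>M. v i) * Ent v M / ((2 * m) choose (m - 1))" if "M \<in> ?K" for M
    using that finite_subset[OF _ \<open>finite L\<close>] by (intro eta_objective_term_eq) auto
  then have "(\<Sum>M\<in>?K. ?obj M) = (\<Sum>M\<in>?K. (\<Sum>i\<in>M. v i) * Ent v M) / ((2 * m) choose (m - 1))"
    unfolding sum_divide_distrib by (rule sum.cong[OF refl])
  also have "\<dots> \<ge> r * (S * Ent v L - S * ln 2)"
    using sum_subsets_sum_mult_Ent_ge[OF \<open>finite L\<close> assms(3,1) pos]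
    by (simp add: r_def S_def divide_right_mono)
  moreover have "(\<Sum>M\<in>?K. ?obj M) \<le> (\<Sum>M\<in>{M. M \<subseteq> {1..n} \<and> card M = m}. ?obj M)"
    using assms finite_subset by (intro sum_mono2) (auto intro!: eta_objective_term_nonneg)
  moreover have "S * Ent v L / 2 - S * ln 2 \<le> r * (S * Ent v L - S * ln 2)"
  proof -
    have r_eq: "r = (real m + 1) / (2 * real m)"
      using arg_cong[OF binomial_ratio_below_middle[OF assms(1)], of real] assms(1)
      by (simp add: r_def field_simps)
    have "1 / 2 \<le> r" "r \<le> 1"
      using assms(1) unfolding r_eq by (simp_all add: field_simps)
    moreover have "0 \<le> S * Ent v L" "0 \<le> S * ln 2"
      using pos unfolding S_def by (intro mult_nonneg_nonneg sum_nonneg Ent_nonneg; force)+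
    ultimately have "S * Ent v L / 2 \<le> r * (S * Ent v L)" and "r * (S * ln 2) \<le> S * ln 2"
      using mult_right_mono by fastforce+
    then show ?thesis unfolding right_diff_distrib by linarith
  qed
  ultimately show ?thesis unfolding S_def by linarith
qed

section \<open>Tails of small variances\<close>

lemma sum_le_of_sum_sqrt_le:
  fixes v :: "'a \<Rightarrow> real"
  assumes "0 \<le> a" "\<And>x. x \<in> A \<Longrightarrow> 0 \<le> v x \<and> v x \<le> a"
    and "(\<Sum>x\<in>A. sqrt (v x)) \<le> c * sqrt a"
  shows "(\<Sum>x\<in>A. v x) \<le> c * a"
proof -
  have "v x \<le> sqrt a * sqrt (v x)" if "x \<in> A" for x
  proof -
    have "v x = sqrt (v x) * sqrt (v x)" using assms(2)[OF that] by simp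
    also have "\<dots> \<le> sqrt a * sqrt (v x)" using assms(2)[OF that] by (intro mult_right_mono) auto
    finally show ?thesis .
  qed
  then have "(\<Sum>x\<in>A. v x) \<le> sqrt a * (\<Sum>x\<in>A. sqrt (v x))"
    unfolding sum_distrib_left by (rule sum_mono)
  also have "\<dots> \<le> sqrt a * (c * sqrt a)"
    using assms(1,3) by (intro mult_left_mono) auto
  also have "\<dots> = c * a"
    using assms(1) by (simp add: algebra_simps flip: power2_eq_square)
  finally show ?thesis .
qed

lemma sum_mult_ln_tail_le:
  fixes v :: "'a \<Rightarrow> real"
  assumes "0 < a" "a \<le> N" "\<And>x. x \<in> A \<Longrightarrow> 0 < v x \<and> v x \<le> a"
    and sqrt_sum: "(\<Sum>x\<in>A. sqrt (v x)) \<le> c * sqrt a"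
  shows "(\<Sum>x\<in>A. v x * ln (N / v x)) \<le> c * a * (ln (N / a) + 2)"
proof -
  have "\<And>x. x \<in> A \<Longrightarrow> 0 \<le> v x \<and> v x \<le> a" using assms(3) by (auto intro: less_imp_le)
  from sum_le_of_sum_sqrt_le[OF _ this sqrt_sum] have "(\<Sum>x\<in>A. v x) \<le> c * a"
    using assms(1) by simp
  have "(\<Sum>x\<in>A. v x * ln (N / v x))
      \<le> (\<Sum>x\<in>A. v x) * ln (N / a) + 2 * sqrt a * (\<Sum>x\<in>A. sqrt (v x))"
    using assms mult_ln_div_le_sqrt[of _ a N]
    by (simp add: sum_distrib_left sum_distrib_right sum_mono flip: sum.distrib)
  also have "(\<Sum>x\<in>A. v x) * ln (N / a) \<le> c * a * ln (N / a)"
    using \<open>(\<Sum>x\<in>A. v x) \<le> c * a\<close> assms(1,2) by (intro mult_right_mono) auto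
  also have "2 * sqrt a * (\<Sum>x\<in>A. sqrt (v x)) \<le> 2 * sqrt a * (c * sqrt a)"
    using sqrt_sum assms(1) by (intro mult_left_mono) auto
  also have "2 * sqrt a * (c * sqrt a) = 2 * c * a"
    using assms(1) by (simp add: algebra_simps flip: power2_eq_square)
  finally show ?thesis by (simp add: algebra_simps)
qed

lemma sum_mult_ln_le_sum_mult_Ent_plus:
  assumes "finite A" "A \<noteq> {}" "\<And>i. i \<in> A \<Longrightarrow> 0 < v i" "(\<Sum>i\<in>A. v i) \<le> N"
  shows "(\<Sum>i\<in>A. v i * ln (N / v i)) \<le> (\<Sum>i\<in>A. v i) * Ent v A + (N - (\<Sum>i\<in>A. v i))"
proof -
  have "0 < (\<Sum>i\<in>A. v i)" using assms by (intro sum_pos) auto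
  then have "(\<Sum>i\<in>A. v i) * ln (N / (\<Sum>i\<in>A. v i)) \<le> N - (\<Sum>i\<in>A. v i)"
    using ln_le_minus_one[of "N / (\<Sum>i\<in>A. v i)"] assms(4) by (simp add: field_simps)
  then show ?thesis
    using sum_mult_ln_rescale[OF assms(1-3)] \<open>0 < (\<Sum>i\<in>A. v i)\<close> assms(4) by simp
qed

lemma sum_mult_Ent_union_le:
  fixes v :: "'a \<Rightarrow> real"
  assumes "finite L" "finite A" "L \<inter> A = {}" "L \<noteq> {}" "0 < a"
    and L: "\<And>x. x \<in> L \<Longrightarrow> a \<le> v x"
    and A: "\<And>x. x \<in> A \<Longrightarrow> 0 < v x \<and> v x \<le> a"
    and sqrt_sum: "(\<Sum>x\<in>A. sqrt (v x)) \<le> 5 * card L * sqrt a"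
  shows "(\<Sum>i\<in>L \<union> A. v i) * Ent v (L \<union> A) \<le> 6 * ((\<Sum>i\<in>L. v i) * Ent v L) + 45 * (\<Sum>i\<in>L. v i)"
proof -
  define S T H k where "S = (\<Sum>i\<in>L. v i)" and "T = (\<Sum>i\<in>A. v i)"
    and "H = S * Ent v L" and "k = real (card L)"
  define N where "N = S + T"
  have posL: "\<And>x. x \<in> L \<Longrightarrow> 0 < v x" using L \<open>0 < a\<close> by (metis order_less_le_trans)
  have "1 \<le> k" using assms(1,4) by (simp add: k_def Suc_leI card_gt_0_iff)
  have "k * a \<le> S" using sum_mono[OF L] by (simp add: S_def k_def)
  then have "a \<le> S" using mult_right_mono[OF \<open>1 \<le> k\<close>, of a] \<open>0 < a\<close> by linarith
  have "0 \<le> T" using A by (simp add: T_def sum_nonneg less_imp_le)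
  have "\<And>x. x \<in> A \<Longrightarrow> 0 \<le> v x \<and> v x \<le> a" using A by (auto intro: less_imp_le)
  from sum_le_of_sum_sqrt_le[OF _ this] have "T \<le> 5 * k * a"
    using sqrt_sum \<open>0 < a\<close> by (simp add: T_def k_def)
  have klog: "k * (a * ln (S / a)) \<le> H + S"
    using card_mult_ln_le_sum_mult_Ent[OF assms(1,5) L] by (simp add: k_def H_def S_def)
  have "0 < S" "S \<le> N" "a \<le> N" using \<open>a \<le> S\<close> \<open>0 < a\<close> \<open>0 \<le> T\<close> by (simp_all add: N_def)
  have "ln (N / S) \<le> N / S - 1"
    using \<open>0 < S\<close> \<open>S \<le> N\<close> by (intro ln_le_minus_one) simp
  also have "N / S - 1 \<le> 5"
    using \<open>0 < S\<close> \<open>T \<le> 5 * k * a\<close> \<open>k * a \<le> S\<close> by (simp add: N_def field_simps)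
  finally have "ln (N / a) \<le> 5 + ln (S / a)"
    using \<open>0 < a\<close> \<open>0 < S\<close> \<open>S \<le> N\<close> by (simp add: ln_div)
  have "N * Ent v (L \<union> A) = (\<Sum>i\<in>L. v i * ln (N / v i)) + (\<Sum>i\<in>A. v i * ln (N / v i))"
  proof -
    have "\<And>i. i \<in> L \<union> A \<Longrightarrow> 0 < v i" using posL A by blast
    from sum_mult_Ent[of "L \<union> A" v, OF _ this] show ?thesis
      using assms by (simp add: N_def S_def T_def sum.union_disjoint)
  qed
  also have "(\<Sum>i\<in>L. v i * ln (N / v i)) \<le> H + T"
    using sum_mult_ln_le_sum_mult_Ent_plus[of L v N, OF assms(1,4) posL] \<open>S \<le> N\<close>
    by (simp add: H_def S_def N_def)
  also have "(\<Sum>i\<in>A. v i * ln (N / v i)) \<le> 5 * k * a * (ln (N / a) + 2)"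
    using sum_mult_ln_tail_le[OF \<open>0 < a\<close> \<open>a \<le> N\<close> A] sqrt_sum by (simp add: k_def)
  also have "\<dots> \<le> 5 * k * a * (7 + ln (S / a))"
    using \<open>ln (N / a) \<le> 5 + ln (S / a)\<close> \<open>1 \<le> k\<close> \<open>0 < a\<close> by (intro mult_left_mono) auto
  also have "\<dots> = 35 * (k * a) + 5 * (k * (a * ln (S / a)))"
    by (simp add: algebra_simps)
  finally have "N * Ent v (L \<union> A) \<le> 6 * H + 45 * S"
    using klog \<open>k * a \<le> S\<close> \<open>T \<le> 5 * k * a\<close> by linarith
  moreover have "(\<Sum>i\<in>L \<union> A. v i) = N"
    using assms by (simp add: N_def S_def T_def sum.union_disjoint)
  ultimately show ?thesis by (simp add: H_def S_def)
qed

section \<open>Dyadic variance groups\<close>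

lemma dyadic_interval_exists:
  fixes y :: real
  assumes "1 \<le> y"
  shows "\<exists>j\<ge>1. 2 ^ (j - 1) \<le> y \<and> y < 2 ^ j"
proof -
  have "1 \<le> nat \<lfloor>y\<rfloor>" using assms by (simp add: le_nat_floor)
  then obtain n where n: "2 ^ n \<le> nat \<lfloor>y\<rfloor>" "nat \<lfloor>y\<rfloor> < (2::nat) ^ (n + 1)"
    using ex_power_ivl1[of 2] by blast
  have floor_eq: "real (nat \<lfloor>y\<rfloor>) = of_int \<lfloor>y\<rfloor>" using assms by simp
  have "real (2 ^ n) \<le> real (nat \<lfloor>y\<rfloor>)" using n(1) by (simp only: of_nat_le_iff)
  then have "(2::real) ^ n \<le> y" unfolding floor_eq by (simp add: le_floor_iff)
  moreover have "real (nat \<lfloor>y\<rfloor> + 1) \<le> real (2 ^ (n + 1))" using n(2) by (simp only: of_nat_le_iff)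
  then have "y < 2 ^ (n + 1)" unfolding of_nat_add floor_eq by simp linarith
  ultimately show ?thesis by (intro exI[of _ "n + 1"]) auto
qed

lemma sum_sqrt2_powers_le:
  assumes "1 \<le> J"
  shows "(\<Sum>j = 1..J. sqrt 2 ^ j) \<le> 5 * sqrt (2 ^ (J - 1))"
proof -
  let ?q = "sqrt (2::real)"
  have "7 / 5 \<le> ?q" by (rule real_le_rsqrt) (simp add: power2_eq_square)
  have "(?q - 1) * (\<Sum>j = 1..J. ?q ^ j) = ?q ^ Suc J - ?q"
    using sum_gp_multiplied[of 1 J ?q] assms by (simp add: algebra_simps)
  also have "?q ^ Suc J = 2 * sqrt (2 ^ (J - 1))"
    using assms by (cases J) (simp_all add: real_sqrt_power)
  finally have "(?q - 1) * (\<Sum>j = 1..J. ?q ^ j) \<le> 2 * sqrt (2 ^ (J - 1))" by simp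
  moreover have "2 / 5 * (\<Sum>j = 1..J. ?q ^ j) \<le> (?q - 1) * (\<Sum>j = 1..J. ?q ^ j)"
    using \<open>7 / 5 \<le> ?q\<close> by (intro mult_right_mono sum_nonneg) auto
  ultimately show ?thesis by simp
qed

lemma sum_sqrt_le_dyadic:
  fixes v :: "'a \<Rightarrow> real"
  assumes "finite A" "0 < \<mu>" "\<mu> \<le> a"
    and range: "\<And>x. x \<in> A \<Longrightarrow> \<mu> \<le> v x \<and> v x \<le> a"
    and sparse: "\<And>j. 1 \<le> j \<Longrightarrow> card {x \<in> A. 2 ^ (j - 1) \<le> v x / \<mu> \<and> v x / \<mu> < 2 ^ j} \<le> K"
  shows "(\<Sum>x\<in>A. sqrt (v x)) \<le> 5 * real K * sqrt a"
proof -
  have "1 \<le> a / \<mu>" using assms by simp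
  then obtain J where J: "1 \<le> J" "2 ^ (J - 1) \<le> a / \<mu>" "a / \<mu> < 2 ^ J"
    using dyadic_interval_exists by blast
  define idx where "idx x = (SOME j. 1 \<le> j \<and> 2 ^ (j - 1) \<le> v x / \<mu> \<and> v x / \<mu> < (2::real) ^ j)" for x
  have idx: "1 \<le> idx x \<and> 2 ^ (idx x - 1) \<le> v x / \<mu> \<and> v x / \<mu> < (2::real) ^ idx x" if "x \<in> A" for x
  proof -
    have "1 \<le> v x / \<mu>" using range[OF that] \<open>0 < \<mu>\<close> by simp
    from dyadic_interval_exists[OF this] show ?thesis unfolding idx_def by (rule someI_ex)
  qed
  have "idx x \<in> {1..J}" if "x \<in> A" for x
  proof -
    have "v x / \<mu> \<le> a / \<mu>" using range[OF that] \<open>0 < \<mu>\<close> by (simp add: divide_right_mono)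
    then have "(2::real) ^ (idx x - 1) < 2 ^ J" using idx[OF that] J(3) by linarith
    then have "idx x - 1 < J" by (rule power_less_imp_less_exp[rotated]) simp
    then show ?thesis using idx[OF that] by auto
  qed
  then have "(\<Sum>x\<in>A. sqrt (v x)) = (\<Sum>j = 1..J. \<Sum>x\<in>{x \<in> A. idx x = j}. sqrt (v x))"
    using \<open>finite A\<close> by (intro sum.group[symmetric]) auto
  also have "\<dots> \<le> (\<Sum>j = 1..J. K * (sqrt \<mu> * sqrt 2 ^ j))"
  proof (rule sum_mono)
    fix j assume "j \<in> {1..J}"
    have "sqrt (v x) \<le> sqrt \<mu> * sqrt 2 ^ j" if "x \<in> {x \<in> A. idx x = j}" for x
    proof -
      have "v x \<le> \<mu> * 2 ^ j" using idx[of x] that \<open>0 < \<mu>\<close> by (auto simp: field_simps)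
      then show ?thesis by (simp flip: real_sqrt_mult real_sqrt_power)
    qed
    then have "(\<Sum>x\<in>{x \<in> A. idx x = j}. sqrt (v x))
        \<le> card {x \<in> A. idx x = j} * (sqrt \<mu> * sqrt 2 ^ j)"
      by (rule sum_bounded_above)
    moreover have "card {x \<in> A. idx x = j} \<le> K"
      using \<open>finite A\<close> idx \<open>j \<in> {1..J}\<close> by (intro order_trans[OF card_mono sparse]) auto
    then have "card {x \<in> A. idx x = j} * (sqrt \<mu> * sqrt 2 ^ j) \<le> K * (sqrt \<mu> * sqrt 2 ^ j)"
      using \<open>0 < \<mu>\<close> by (intro mult_right_mono) auto
    ultimately show "(\<Sum>x\<in>{x \<in> A. idx x = j}. sqrt (v x)) \<le> K * (sqrt \<mu> * sqrt 2 ^ j)"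
      by linarith
  qed
  also have "\<dots> = K * sqrt \<mu> * (\<Sum>j = 1..J. sqrt 2 ^ j)"
    by (simp add: sum_distrib_left mult.assoc)
  also have "\<dots> \<le> K * sqrt \<mu> * (5 * sqrt (2 ^ (J - 1)))"
    using sum_sqrt2_powers_le[OF J(1)] \<open>0 < \<mu>\<close> by (intro mult_left_mono) auto
  also have "\<dots> \<le> K * sqrt \<mu> * (5 * sqrt (a / \<mu>))"
    using J(2) \<open>0 < \<mu>\<close> by (intro mult_left_mono) auto
  also have "\<dots> = 5 * real K * sqrt a"
    using \<open>0 < \<mu>\<close> by (simp add: real_sqrt_divide)
  finally show ?thesis .
qed

lemma minvar_le: "x \<in> {1..n} \<Longrightarrow> minvar n v \<le> v x"
  unfolding minvar_def by simp

lemma minvar_pos: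
  assumes "\<forall>i\<in>{1..n}. 0 < v i" "1 \<le> n"
  shows "0 < minvar n v"
proof -
  have "minvar n v \<in> v ` {1..n}"
    unfolding minvar_def using assms(2) by (intro Min_in) auto
  then show ?thesis using assms(1) by auto
qed

lemma card_admissible_Gr_inter_grp:
  assumes "admissible_Gr n m v R" "1 \<le> j"
  shows "card (R \<inter> grp n v j) \<le> 2 * m"
  using assms unfolding admissible_Gr_def by (cases "card (grp n v j) \<le> 2 * m") auto

lemma Gl_subset_admissible_Gr:
  assumes "admissible_Gr n m v R"
  shows "Gl n m v \<subseteq> R"
proof
  fix x assume "x \<in> Gl n m v"
  then obtain j where "1 \<le> j" "card (grp n v j) \<le> 2 * m" "x \<in> grp n v j"
    unfolding Gl_def by auto
  moreover from calculation have "R \<inter> grp n v j = grp n v j"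
    using assms unfolding admissible_Gr_def by auto
  ultimately show "x \<in> R" by blast
qed

lemma Gl_sum_mult_Ent_le:
  fixes v :: "nat \<Rightarrow> real"
  assumes "1 \<le> m" "\<forall>i\<in>{1..n}. 0 < v i" "admissible_Gr n m v R" "is_top m v R L"
  shows "(\<Sum>i\<in>Gl n m v. v i) * Ent v R \<le> 6 * ((\<Sum>i\<in>L. v i) * Ent v L) + 45 * (\<Sum>i\<in>L. v i)"
proof -
  have "R \<subseteq> {1..n}" "L \<subseteq> R" "card L = 2 * m" and top: "\<forall>i\<in>L. \<forall>j\<in>R - L. v j \<le> v i"
    using assms(3,4) by (auto simp: admissible_Gr_def is_top_def)
  then have "finite R" "finite L" "L \<noteq> {}" using assms(1) by (auto intro: finite_subset)
  define a where "a = Min (v ` L)"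
  have "a \<in> v ` L" unfolding a_def using \<open>finite L\<close> \<open>L \<noteq> {}\<close> by (intro Min_in) auto
  then obtain i0 where "i0 \<in> L" "a = v i0" by auto
  then have "0 < a" "minvar n v \<le> a" "1 \<le> n"
    using assms(2) \<open>R \<subseteq> {1..n}\<close> \<open>L \<subseteq> R\<close> minvar_le by auto
  have L: "\<And>x. x \<in> L \<Longrightarrow> a \<le> v x" unfolding a_def using \<open>finite L\<close> by simp
  have tail: "\<And>x. x \<in> R - L \<Longrightarrow> minvar n v \<le> v x \<and> v x \<le> a"
    using top \<open>i0 \<in> L\<close> \<open>a = v i0\<close> \<open>R \<subseteq> {1..n}\<close> minvar_le by blast
  have "(\<Sum>x\<in>R - L. sqrt (v x)) \<le> 5 * real (2 * m) * sqrt a"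
  proof (rule sum_sqrt_le_dyadic[of "R - L" "minvar n v" a v "2 * m"])
    show "card {x \<in> R - L. 2 ^ (j - 1) \<le> v x / minvar n v \<and> v x / minvar n v < 2 ^ j} \<le> 2 * m"
      if "1 \<le> j" for j
      using \<open>R \<subseteq> {1..n}\<close>
      by (intro order_trans[OF card_mono card_admissible_Gr_inter_grp[OF assms(3) that]])
         (auto simp: grp_def)
  qed (use \<open>finite R\<close> minvar_pos[OF assms(2) \<open>1 \<le> n\<close>] \<open>minvar n v \<le> a\<close> tail in auto)
  then have sqrt_tail: "(\<Sum>x\<in>R - L. sqrt (v x)) \<le> 5 * real (card L) * sqrt a"
    using \<open>card L = 2 * m\<close> by simp
  have "(\<Sum>i\<in>L \<union> (R - L). v i) * Ent v (L \<union> (R - L))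
      \<le> 6 * ((\<Sum>i\<in>L. v i) * Ent v L) + 45 * (\<Sum>i\<in>L. v i)"
    by (rule sum_mult_Ent_union_le[OF \<open>finite L\<close> _ _ \<open>L \<noteq> {}\<close> \<open>0 < a\<close> L])
      (use sqrt_tail tail minvar_pos[OF assms(2) \<open>1 \<le> n\<close>] \<open>finite R\<close> in \<open>auto intro: order_less_le_trans\<close>)
  moreover have "L \<union> (R - L) = R" using \<open>L \<subseteq> R\<close> by blast
  moreover have "(\<Sum>i\<in>Gl n m v. v i) * Ent v R \<le> (\<Sum>i\<in>R. v i) * Ent v R"
    using Gl_subset_admissible_Gr[OF assms(3)] \<open>finite R\<close> \<open>R \<subseteq> {1..n}\<close> assms(2)
    by (intro mult_right_mono sum_mono2 Ent_nonneg) (auto intro: less_imp_le)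
  ultimately show ?thesis by simp
qed

theorem lemma7:
  shows "\<exists>c'::real. c' > 0 \<and>
    (\<forall>(m::nat) (n::nat) (v::nat \<Rightarrow> real) R L.
      1 \<le> m \<longrightarrow> n > 2 * m \<longrightarrow> (\<forall>i\<in>{1..n}. v i > 0) \<longrightarrow>
      is_Gr n m v R \<longrightarrow> is_top m v R L \<longrightarrow>
      (\<Sum>M\<in>{M. M \<subseteq> {1..n} \<and> card M = m}.
          (\<Sum>l\<in>M. eta m L (M - {l}) * v l) * Ent (\<lambda>l. eta m L (M - {l}) * v l) M)
      \<ge> c' * (\<Sum>i\<in>Gl n m v. v i) * Ent v R - ln 2 * (\<Sum>i\<in>L. v i))"
proof (intro exI[of _ "1 / 200"] conjI allI impI, goal_cases)
  case 1
  show ?case by simp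
next
  case (2 m n v R L)
  then have adm: "admissible_Gr n m v R" and "L \<subseteq> {1..n}" "card L = 2 * m"
    by (auto simp: is_Gr_def is_top_def admissible_Gr_def)
  define S where "S = (\<Sum>i\<in>L. v i)"
  have "0 \<le> S" "0 \<le> S * Ent v L"
    using 2 \<open>L \<subseteq> {1..n}\<close> unfolding S_def
    by (intro mult_nonneg_nonneg sum_nonneg Ent_nonneg; force)+
  moreover have "S * (2 / 3) \<le> S * ln 2"
    using mult_left_mono[OF ln2_ge_two_thirds \<open>0 \<le> S\<close>] .
  moreover have "0 \<le> (\<Sum>M\<in>{M. M \<subseteq> {1..n} \<and> card M = m}.
      (\<Sum>l\<in>M. eta m L (M - {l}) * v l) * Ent (\<lambda>l. eta m L (M - {l}) * v l) M)"
    using 2 by (intro sum_nonneg eta_objective_term_nonneg) (auto intro: finite_subset)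
  ultimately show ?case
    using eta_objective_ge[OF 2(1) \<open>L \<subseteq> {1..n}\<close> \<open>card L = 2 * m\<close> 2(3)]
      Gl_sum_mult_Ent_le[OF 2(1) 2(3) adm 2(5)]
    unfolding S_def by (simp add: mult.commute)
qed

end
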